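(* Let $U$ be a discrete group with torsion and $e\in\mathbb{C}[U]$ a nontrivial projection. In $\mathbb{C}[U\wr\mathbb{Z}]$ put $e_i=t^{-i}et^i$, $f_i=1-e_i$ for $i\in\mathbb{Z}$, and for $n\ge 2$ put $q_n=f_1e_2e_3\cdots e_{n-1}f_n$ (so $q_2=f_1f_2$). If $1\le m<n$ and $1\le m'<n'$, then \[ q_{n'}t^{-m'}t^{m}q_n=\delta_{n,n'}\delta_{m,m'}\,q_n . \]
   Context: $U\wr\mathbb{Z}=(\bigoplus_{i\in\mathbb{Z}}U)\rtimes C_\infty$, where $C_\infty$ is infinite cyclic with generator $t$ acting by the shift $t^{-1}((g_n)_{n})t=(g_{n-1})_n$; $U$ is identified with the subgroup of elements $(\dots,1,u,1,\dots)$ with $u$ in position $0$. A nontrivial projection means $e=e^*=e^2$, $e\ne 0,1$. $\delta$ is the Kronecker delta. *)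

theory Defs
  imports Complex_Main "HOL-Algebra.Group"
begin

definition galg_elem :: "('g, 'b) monoid_scheme \<Rightarrow> ('g \<Rightarrow> complex) \<Rightarrow> bool" where
  "galg_elem G x \<longleftrightarrow> finite {g. x g \<noteq> 0} \<and> {g. x g \<noteq> 0} \<subseteq> carrier G"

definition conv :: "('g, 'b) monoid_scheme \<Rightarrow> ('g \<Rightarrow> complex) \<Rightarrow> ('g \<Rightarrow> complex) \<Rightarrow> ('g \<Rightarrow> complex)" where
  "conv G x y = (\<lambda>g. if g \<in> carrier G
      then (\<Sum>h \<in> {h \<in> carrier G. x h \<noteq> 0}. x h * y (inv\<^bsub>G\<^esub> h \<otimes>\<^bsub>G\<^esub> g)) else 0)"

definition gstar :: "('g, 'b) monoid_scheme \<Rightarrow> ('g \<Rightarrow> complex) \<Rightarrow> ('g \<Rightarrow> complex)" where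
  "gstar G x = (\<lambda>g. if g \<in> carrier G then cnj (x (inv\<^bsub>G\<^esub> g)) else 0)"

definition gbasis :: "'g \<Rightarrow> ('g \<Rightarrow> complex)" where
  "gbasis g = (\<lambda>h. if h = g then 1 else 0)"

definition gunit :: "('g, 'b) monoid_scheme \<Rightarrow> ('g \<Rightarrow> complex)" where
  "gunit G = gbasis \<one>\<^bsub>G\<^esub>"

definition nontriv_projection :: "('g, 'b) monoid_scheme \<Rightarrow> ('g \<Rightarrow> complex) \<Rightarrow> bool" where
  "nontriv_projection G e \<longleftrightarrow> galg_elem G e \<and> gstar G e = e \<and> conv G e e = e
     \<and> e \<noteq> (\<lambda>_. 0) \<and> e \<noteq> gunit G"

definition has_torsion :: "('g, 'b) monoid_scheme \<Rightarrow> bool" where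
  "has_torsion G \<longleftrightarrow> (\<exists>u \<in> carrier G. u \<noteq> \<one>\<^bsub>G\<^esub> \<and> (\<exists>n::nat. n > 0 \<and> u [^]\<^bsub>G\<^esub> n = \<one>\<^bsub>G\<^esub>))"

text \<open>An element (g, k) stands for g t^k with g in the restricted direct sum of copies of U.
  Since t^{-1} g t = sigma(g) with sigma(g)_n = g_{n-1}, one has t^k h t^{-k} = (n \<mapsto> h_{n+k}),
  hence (g t^k)(h t^r) = (n \<mapsto> g_n h_{n+k}) t^{k+r}.\<close>
definition wreath :: "('a, 'b) monoid_scheme \<Rightarrow> ((int \<Rightarrow> 'a) \<times> int) monoid" where
  "wreath U = \<lparr> carrier = {(g, k). (\<forall>n. g n \<in> carrier U) \<and> finite {n. g n \<noteq> \<one>\<^bsub>U\<^esub>}},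
      mult = (\<lambda>x y. (\<lambda>n. fst x n \<otimes>\<^bsub>U\<^esub> fst y (n + snd x), snd x + snd y)),
      one = (\<lambda>_. \<one>\<^bsub>U\<^esub>, 0) \<rparr>"

definition tpow :: "('a, 'b) monoid_scheme \<Rightarrow> int \<Rightarrow> (int \<Rightarrow> 'a) \<times> int" where
  "tpow U k = (\<lambda>_. \<one>\<^bsub>U\<^esub>, k)"

definition wemb :: "('a, 'b) monoid_scheme \<Rightarrow> ('a \<Rightarrow> complex) \<Rightarrow> ((int \<Rightarrow> 'a) \<times> int \<Rightarrow> complex)" where
  "wemb U x = (\<lambda>(g, k). if k = 0 \<and> (\<forall>n. n \<noteq> 0 \<longrightarrow> g n = \<one>\<^bsub>U\<^esub>) then x (g 0) else 0)"

definition e_i :: "('a, 'b) monoid_scheme \<Rightarrow> ('a \<Rightarrow> complex) \<Rightarrow> int \<Rightarrow> ((int \<Rightarrow> 'a) \<times> int \<Rightarrow> complex)" where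
  "e_i U e i = conv (wreath U) (conv (wreath U) (gbasis (tpow U (-i))) (wemb U e)) (gbasis (tpow U i))"

definition f_i :: "('a, 'b) monoid_scheme \<Rightarrow> ('a \<Rightarrow> complex) \<Rightarrow> int \<Rightarrow> ((int \<Rightarrow> 'a) \<times> int \<Rightarrow> complex)" where
  "f_i U e i = gunit (wreath U) - e_i U e i"

definition gprod_list :: "('g, 'b) monoid_scheme \<Rightarrow> ('g \<Rightarrow> complex) list \<Rightarrow> ('g \<Rightarrow> complex)" where
  "gprod_list G xs = foldr (conv G) xs (gunit G)"

definition q_n :: "('a, 'b) monoid_scheme \<Rightarrow> ('a \<Rightarrow> complex) \<Rightarrow> int \<Rightarrow> ((int \<Rightarrow> 'a) \<times> int \<Rightarrow> complex)" where
  "q_n U e n = conv (wreath U)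
      (conv (wreath U) (f_i U e 1) (gprod_list (wreath U) (map (e_i U e) [2..n-1])))
      (f_i U e n)"

end

(*
  Products of elements of C[U] placed at distinct positions of U wr Z behave like elementary
  tensors: if x t^d carries x_j at position j and y t^r carries y_j, then
  (x t^d)(y t^r) carries x_j y_(j+d) at position j, times t^(d+r), because conjugation by t^d
  shifts positions by d.  So q_n is the tensor f e ... e f on the positions 1..n, where
  f = 1 - e, and q_n' t^(m-m') q_n is the position-wise product of q_n' shifted by
  D = m - m' with q_n.  As e f = f e = 0, it vanishes once an f meets an e: for D > 0 at
  position 1, for D < 0 at position 1 - D, and for D = 0, n ~= n' at position min n n'; the
  bounds 1 <= m < n and 1 <= m' < n' keep these positions inside both blocks.  In the
  remaining case every factor is e e = e or f f = f.
*)

theory Submission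
  imports Defs
begin

lemma wreath_simps:
  "carrier (wreath U) = {(g, k). (\<forall>n. g n \<in> carrier U) \<and> finite {n. g n \<noteq> \<one>\<^bsub>U\<^esub>}}"
  "x \<otimes>\<^bsub>wreath U\<^esub> y = (\<lambda>n. fst x n \<otimes>\<^bsub>U\<^esub> fst y (n + snd x), snd x + snd y)"
  "\<one>\<^bsub>wreath U\<^esub> = (\<lambda>_. \<one>\<^bsub>U\<^esub>, 0)"
  by (simp_all add: wreath_def)

lemma finite_Collect_shift:
  fixes k :: int
  assumes "finite {n. P n}"
  shows "finite {n. P (n + k)}"
proof -
  have "{n. P (n + k)} = (\<lambda>n. n - k) ` {n. P n}"
    by (auto intro: image_eqI[where x = "_ + k"])
  then show ?thesis
    using assms by simp
qed

lemma wreath_inverse_closed: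
  fixes U (structure)
  assumes "group U" "(g, d) \<in> carrier (wreath U)"
  shows "(\<lambda>n. inv (g (n - d)), - d) \<in> carrier (wreath U)"
proof -
  interpret group U by fact
  have "{n. inv (g (n - d)) \<noteq> \<one>} \<subseteq> {n. g (n + - d) \<noteq> \<one>}"
    by auto
  moreover have "finite {n. g (n + - d) \<noteq> \<one>}"
    using assms(2) by (intro finite_Collect_shift) (simp add: wreath_simps)
  ultimately show ?thesis
    using assms(2) by (auto simp: wreath_simps intro: finite_subset)
qed

lemma group_wreath:
  fixes U (structure)
  assumes "group U"
  shows "group (wreath U)"
proof -
  interpret group U by fact
  show ?thesis
  proof (rule groupI)
    fix x y
    assume x: "x \<in> carrier (wreath U)" and y: "y \<in> carrier (wreath U)"
    have "{n. fst x n \<otimes> fst y (n + snd x) \<noteq> \<one>}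
        \<subseteq> {n. fst x n \<noteq> \<one>} \<union> {n. fst y (n + snd x) \<noteq> \<one>}"
      by auto
    moreover have "finite {n. fst y (n + snd x) \<noteq> \<one>}"
      using y by (intro finite_Collect_shift) (auto simp: wreath_simps)
    ultimately show "x \<otimes>\<^bsub>wreath U\<^esub> y \<in> carrier (wreath U)"
      using x y by (auto simp: wreath_simps intro: finite_subset)
  next
    show "\<one>\<^bsub>wreath U\<^esub> \<in> carrier (wreath U)"
      by (simp add: wreath_simps)
  next
    fix x y z
    assume "x \<in> carrier (wreath U)" "y \<in> carrier (wreath U)" "z \<in> carrier (wreath U)"
    then show "x \<otimes>\<^bsub>wreath U\<^esub> y \<otimes>\<^bsub>wreath U\<^esub> z = x \<otimes>\<^bsub>wreath U\<^esub> (y \<otimes>\<^bsub>wreath U\<^esub> z)"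
      by (auto simp: wreath_simps m_assoc add.assoc)
  next
    fix x
    assume "x \<in> carrier (wreath U)"
    then show "\<one>\<^bsub>wreath U\<^esub> \<otimes>\<^bsub>wreath U\<^esub> x = x"
      by (auto simp: wreath_simps)
  next
    fix x
    assume x: "x \<in> carrier (wreath U)"
    obtain g d where x_eq: "x = (g, d)"
      by fastforce
    have "(\<lambda>n. inv (g (n - d)), - d) \<otimes>\<^bsub>wreath U\<^esub> x = \<one>\<^bsub>wreath U\<^esub>"
      using x by (auto simp: x_eq wreath_simps)
    then show "\<exists>y\<in>carrier (wreath U). y \<otimes>\<^bsub>wreath U\<^esub> x = \<one>\<^bsub>wreath U\<^esub>"
      using wreath_inverse_closed[OF assms] x unfolding x_eq by blast
  qed
qed

lemma wreath_inv:
  assumes "group U" "(g, d) \<in> carrier (wreath U)"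
  shows "inv\<^bsub>wreath U\<^esub> (g, d) = (\<lambda>n. inv\<^bsub>U\<^esub> g (n - d), - d)"
proof -
  interpret U: group U by fact
  interpret W: group "wreath U" by (rule group_wreath[OF assms(1)])
  have "(\<lambda>n. inv\<^bsub>U\<^esub> g (n - d), - d) \<otimes>\<^bsub>wreath U\<^esub> (g, d) = \<one>\<^bsub>wreath U\<^esub>"
    using assms(2) by (auto simp: wreath_simps)
  then show ?thesis
    using W.inv_equality wreath_inverse_closed[OF assms] assms(2) by blast
qed

lemma conv_eq_sum_superset:
  assumes "finite S" "{h. x h \<noteq> 0} \<subseteq> S" "S \<subseteq> carrier G"
  shows "conv G x y g = (if g \<in> carrier G then (\<Sum>h\<in>S. x h * y (inv\<^bsub>G\<^esub> h \<otimes>\<^bsub>G\<^esub> g)) else 0)"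
proof -
  have "(\<Sum>h \<in> {h \<in> carrier G. x h \<noteq> 0}. x h * y (inv\<^bsub>G\<^esub> h \<otimes>\<^bsub>G\<^esub> g))
      = (\<Sum>h\<in>S. x h * y (inv\<^bsub>G\<^esub> h \<otimes>\<^bsub>G\<^esub> g))"
    by (rule sum.mono_neutral_left) (use assms in auto)
  then show ?thesis
    by (simp add: conv_def)
qed

lemma galg_elem_gbasis: "g \<in> carrier G \<Longrightarrow> galg_elem G (gbasis g)"
  by (auto simp: galg_elem_def gbasis_def)

lemma galg_elem_diff:
  assumes "galg_elem G x" "galg_elem G y"
  shows "galg_elem G (x - y)"
proof -
  have "{g. (x - y) g \<noteq> 0} \<subseteq> {g. x g \<noteq> 0} \<union> {g. y g \<noteq> 0}"
    by auto
  then show ?thesis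
    using assms unfolding galg_elem_def by (meson finite_Un finite_subset le_sup_iff order_trans)
qed

lemma conv_gbasis_one_left:
  fixes G (structure)
  assumes "group G" "galg_elem G x"
  shows "conv G (gbasis \<one>) x = x"
proof
  interpret group G by fact
  fix g
  have "conv G (gbasis \<one>) x g = (if g \<in> carrier G then (\<Sum>h\<in>{\<one>}. gbasis \<one> h * x (inv h \<otimes> g)) else 0)"
    by (rule conv_eq_sum_superset) (auto simp: gbasis_def)
  then show "conv G (gbasis \<one>) x g = x g"
    using assms(2) by (auto simp: gbasis_def galg_elem_def)
qed

lemma conv_gbasis_one_right:
  fixes G (structure)
  assumes "group G" "galg_elem G x"
  shows "conv G x (gbasis \<one>) = x"
proof
  interpret group G by fact
  fix g
  let ?A = "{g. x g \<noteq> 0}"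
  have A: "finite ?A" "?A \<subseteq> carrier G"
    using assms(2) by (auto simp: galg_elem_def)
  have "(\<Sum>h\<in>?A. x h * gbasis \<one> (inv h \<otimes> g)) = (\<Sum>h\<in>?A. if h = g then x h else 0)"
    if "g \<in> carrier G"
  proof (rule sum.cong)
    fix h
    assume "h \<in> ?A"
    then have "inv h \<otimes> g = \<one> \<longleftrightarrow> h = g"
      using A that by (metis inv_equality inv_inv l_inv inv_closed subsetD)
    then show "x h * gbasis \<one> (inv h \<otimes> g) = (if h = g then x h else 0)"
      by (simp add: gbasis_def)
  qed simp
  moreover have "conv G x (gbasis \<one>) g
      = (if g \<in> carrier G then (\<Sum>h\<in>?A. x h * gbasis \<one> (inv h \<otimes> g)) else 0)"
    by (rule conv_eq_sum_superset) (use A in auto)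
  ultimately show "conv G x (gbasis \<one>) g = x g"
    using A by auto
qed

lemma conv_diff_left:
  assumes "galg_elem G x" "galg_elem G y"
  shows "conv G (x - y) z = conv G x z - conv G y z"
proof
  fix g
  let ?S = "{g. x g \<noteq> 0} \<union> {g. y g \<noteq> 0}"
  have S: "finite ?S" "?S \<subseteq> carrier G"
    using assms by (auto simp: galg_elem_def)
  have "conv G w z g = (if g \<in> carrier G then (\<Sum>h\<in>?S. w h * z (inv\<^bsub>G\<^esub> h \<otimes>\<^bsub>G\<^esub> g)) else 0)"
    if "w \<in> {x, y, x - y}" for w
    by (rule conv_eq_sum_superset) (use S that in auto)
  then show "conv G (x - y) z g = (conv G x z - conv G y z) g"
    by (simp add: left_diff_distrib sum_subtractf)
qed

lemma conv_diff_right: "conv G x (y - z) = conv G x y - conv G x z"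
  by (rule ext) (simp add: conv_def right_diff_distrib sum_subtractf)

(* For finite S this is the product of the elements t^-j (phi j) t^j, j in S, followed by t^d:
   the factor phi j sits at position j. *)
definition wtensor ::
    "('a, 'b) monoid_scheme \<Rightarrow> int \<Rightarrow> int set \<Rightarrow> (int \<Rightarrow> 'a \<Rightarrow> complex) \<Rightarrow> ((int \<Rightarrow> 'a) \<times> int \<Rightarrow> complex)" where
  "wtensor U d S \<phi> = (\<lambda>(x, k). if k = d \<and> (\<forall>n. x n \<in> carrier U) \<and> (\<forall>n. n \<notin> S \<longrightarrow> x n = \<one>\<^bsub>U\<^esub>)
      then (\<Prod>j\<in>S. \<phi> j (x j)) else 0)"

lemma wtensor_cong: "(\<And>j. j \<in> S \<Longrightarrow> \<phi> j = \<psi> j) \<Longrightarrow> wtensor U d S \<phi> = wtensor U d S \<psi>"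
  by (auto simp: wtensor_def intro!: ext prod.cong)

lemma wtensor_eq_zero:
  assumes "finite S" "j \<in> S" "\<phi> j = (\<lambda>_. 0)"
  shows "wtensor U d S \<phi> = (\<lambda>_. 0)"
proof
  fix z :: "(int \<Rightarrow> 'a) \<times> int"
  obtain x k where z: "z = (x, k)"
    by fastforce
  have "(\<Prod>j\<in>S. \<phi> j (x j)) = 0"
    using assms by (intro prod_zero) (auto intro!: bexI[of _ j])
  then show "wtensor U d S \<phi> z = 0"
    by (simp add: wtensor_def z)
qed

lemma wtensor_extend:
  assumes "finite S'" "S \<subseteq> S'" "\<And>j. j \<in> S' - S \<Longrightarrow> \<phi> j = gbasis \<one>\<^bsub>U\<^esub>"
  shows "wtensor U d S \<phi> = wtensor U d S' \<phi>"
proof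
  fix z :: "(int \<Rightarrow> 'a) \<times> int"
  obtain x k where z: "z = (x, k)"
    by fastforce
  have "(\<Prod>j\<in>S' - S. \<phi> j (x j)) = (\<Prod>j\<in>S' - S. if x j = \<one>\<^bsub>U\<^esub> then 1 else 0)"
    by (rule prod.cong) (auto simp: assms(3) gbasis_def)
  also have "\<dots> = (if \<forall>j\<in>S' - S. x j = \<one>\<^bsub>U\<^esub> then 1 else 0)"
    using assms(1) by (auto intro: prod_zero)
  finally have "(\<Prod>j\<in>S'. \<phi> j (x j)) = (if \<forall>j\<in>S' - S. x j = \<one>\<^bsub>U\<^esub> then 1 else 0) * (\<Prod>j\<in>S. \<phi> j (x j))"
    using prod.subset_diff[OF assms(2,1), of "\<lambda>j. \<phi> j (x j)"] by simp
  then show "wtensor U d S \<phi> z = wtensor U d S' \<phi> z"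
    using assms(2) by (auto simp: z wtensor_def)
qed

lemma wtensor_singleton_diff: "wtensor U d {i} \<phi> - wtensor U d {i} \<psi> = wtensor U d {i} (\<lambda>j. \<phi> j - \<psi> j)"
  by (auto simp: wtensor_def intro!: ext)

lemma gbasis_tpow_eq_wtensor: "group U \<Longrightarrow> gbasis (tpow U d) = wtensor U d {} \<phi>"
  by (auto simp: gbasis_def tpow_def wtensor_def group.is_monoid fun_eq_iff)

lemma gunit_wreath_eq_wtensor: "group U \<Longrightarrow> gunit (wreath U) = wtensor U 0 {} \<phi>"
  by (auto simp: gunit_def gbasis_def wreath_simps wtensor_def group.is_monoid fun_eq_iff)

lemma wemb_eq_wtensor:
  assumes "group U" "galg_elem U e"
  shows "wemb U e = wtensor U 0 {0} (\<lambda>_. e)"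
proof
  fix z :: "(int \<Rightarrow> 'a) \<times> int"
  obtain x k where z: "z = (x, k)"
    by fastforce
  have "e (x 0) = 0" if "x 0 \<notin> carrier U"
    using that assms(2) by (auto simp: galg_elem_def)
  moreover have "\<one>\<^bsub>U\<^esub> \<in> carrier U"
    using assms(1) by (simp add: group.is_monoid monoid.one_closed)
  ultimately show "wemb U e z = wtensor U 0 {0} (\<lambda>_. e) z"
    by (auto simp: wemb_def wtensor_def z) metis
qed

lemma all_notin_shift_iff:
  fixes d :: int
  shows "(\<forall>n. n \<notin> (\<lambda>j. j + d) ` S \<longrightarrow> P (n - d)) \<longleftrightarrow> (\<forall>n. n \<notin> S \<longrightarrow> P n)"
proof
  assume shifted: "\<forall>n. n \<notin> (\<lambda>j. j + d) ` S \<longrightarrow> P (n - d)"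
  show "\<forall>n. n \<notin> S \<longrightarrow> P n"
  proof (intro allI impI)
    fix n
    assume "n \<notin> S"
    then have "n + d \<notin> (\<lambda>j. j + d) ` S"
      by auto
    then show "P n"
      using shifted[rule_format, of "n + d"] by simp
  qed
next
  assume "\<forall>n. n \<notin> S \<longrightarrow> P n"
  moreover have "n - d \<notin> S" if "n \<notin> (\<lambda>j. j + d) ` S" for n
    using that by force
  ultimately show "\<forall>n. n \<notin> (\<lambda>j. j + d) ` S \<longrightarrow> P (n - d)"
    by blast
qed

lemma wtensor_shifted_at_inv_mult:
  fixes U (structure)
  assumes "group U" "finite S" "\<And>n. s n \<in> carrier U" "\<And>n. n \<notin> S \<Longrightarrow> s n = \<one>"
    and "\<And>n. x n \<in> carrier U"
  shows "wtensor U r ((\<lambda>j. j + d) ` S) \<psi> (inv\<^bsub>wreath U\<^esub> (s, d) \<otimes>\<^bsub>wreath U\<^esub> (x, k))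
    = (if k = d + r \<and> (\<forall>n. n \<notin> S \<longrightarrow> x n = \<one>) then (\<Prod>j\<in>S. \<psi> (j + d) (inv (s j) \<otimes> x j)) else 0)"
proof -
  interpret group U by fact
  have "{n. s n \<noteq> \<one>} \<subseteq> S"
    using assms(4) by auto
  then have "(s, d) \<in> carrier (wreath U)"
    using assms(2,3) by (auto simp: wreath_simps intro: finite_subset)
  then have prod_eq: "inv\<^bsub>wreath U\<^esub> (s, d) \<otimes>\<^bsub>wreath U\<^esub> (x, k) = (\<lambda>n. inv (s (n - d)) \<otimes> x (n - d), k - d)"
    by (simp add: wreath_inv[OF assms(1)] wreath_simps)
  have "(\<forall>n. n \<notin> (\<lambda>j. j + d) ` S \<longrightarrow> inv (s (n - d)) \<otimes> x (n - d) = \<one>)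
      \<longleftrightarrow> (\<forall>n. n \<notin> S \<longrightarrow> x n = \<one>)"
    using all_notin_shift_iff[of d S "\<lambda>n. inv (s n) \<otimes> x n = \<one>"] assms(4,5) by simp
  moreover have "(\<Prod>j\<in>(\<lambda>j. j + d) ` S. \<psi> j (inv (s (j - d)) \<otimes> x (j - d)))
      = (\<Prod>j\<in>S. \<psi> (j + d) (inv (s j) \<otimes> x j))"
    by (subst prod.reindex) (auto simp: inj_on_def)
  moreover have "k - d = r \<longleftrightarrow> k = d + r"
    by arith
  ultimately show ?thesis
    unfolding prod_eq wtensor_def using assms(3,5) by auto
qed

lemma wtensor_outside_carrier:
  assumes "finite S" "z \<notin> carrier (wreath U)"
  shows "wtensor U d S \<phi> z = 0"
proof -
  obtain x k where z: "z = (x, k)"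
    by fastforce
  have "\<not> ((\<forall>n. x n \<in> carrier U) \<and> (\<forall>n. n \<notin> S \<longrightarrow> x n = \<one>\<^bsub>U\<^esub>))"
    using assms by (auto simp: z wreath_simps intro: finite_subset)
  then show ?thesis
    by (auto simp: wtensor_def z)
qed

lemma wtensor_support:
  assumes "finite S"
  shows "{h. wtensor U d S \<phi> h \<noteq> 0}
    \<subseteq> (\<lambda>\<sigma>. (\<lambda>n. if n \<in> S then \<sigma> n else \<one>\<^bsub>U\<^esub>, d)) ` PiE S (\<lambda>j. {a. \<phi> j a \<noteq> 0})"
proof
  fix h
  assume h: "h \<in> {h. wtensor U d S \<phi> h \<noteq> 0}"
  obtain g k where h_eq: "h = (g, k)"
    by fastforce
  have "k = d" "\<forall>n. n \<notin> S \<longrightarrow> g n = \<one>\<^bsub>U\<^esub>" "\<forall>j\<in>S. \<phi> j (g j) \<noteq> 0"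
    using h assms by (auto simp: h_eq wtensor_def split: if_splits)
  then have "restrict g S \<in> PiE S (\<lambda>j. {a. \<phi> j a \<noteq> 0})"
    "h = (\<lambda>n. if n \<in> S then restrict g S n else \<one>\<^bsub>U\<^esub>, d)"
    by (auto simp: h_eq)
  then show "h \<in> (\<lambda>\<sigma>. (\<lambda>n. if n \<in> S then \<sigma> n else \<one>\<^bsub>U\<^esub>, d)) ` PiE S (\<lambda>j. {a. \<phi> j a \<noteq> 0})"
    by blast
qed

lemma conv_wtensor_eq_sum_PiE:
  fixes U (structure)
  assumes "group U" "finite S" "\<And>j. galg_elem U (\<phi> j)" "z \<in> carrier (wreath U)"
  shows "conv (wreath U) (wtensor U d S \<phi>) y z
    = (\<Sum>\<sigma>\<in>PiE S (\<lambda>j. {a. \<phi> j a \<noteq> 0}). (\<Prod>j\<in>S. \<phi> j (\<sigma> j))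
         * y (inv\<^bsub>wreath U\<^esub> (\<lambda>n. if n \<in> S then \<sigma> n else \<one>, d) \<otimes>\<^bsub>wreath U\<^esub> z))"
proof -
  interpret group U by fact
  let ?W = "wreath U" and ?X = "wtensor U d S \<phi>"
  let ?P = "PiE S (\<lambda>j. {a. \<phi> j a \<noteq> 0})"
  define emb where "emb \<sigma> = (\<lambda>n. if n \<in> S then \<sigma> n else \<one>, d)" for \<sigma> :: "int \<Rightarrow> 'a"
  have in_carrier: "\<phi> j a \<noteq> 0 \<Longrightarrow> a \<in> carrier U" for j a
    using assms(3) by (auto simp: galg_elem_def)
  have "finite ?P"
    using assms(2,3) by (intro finite_PiE) (auto simp: galg_elem_def)
  moreover have "emb ` ?P \<subseteq> carrier ?W"
  proof
    fix h
    assume "h \<in> emb ` ?P"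
    then obtain \<sigma> where "\<sigma> \<in> ?P" "h = emb \<sigma>"
      by blast
    moreover have "{n. (if n \<in> S then \<sigma> n else \<one>) \<noteq> \<one>} \<subseteq> S"
      by auto
    ultimately show "h \<in> carrier ?W"
      using assms(2) in_carrier by (auto simp: emb_def wreath_simps intro: finite_subset)
  qed
  ultimately have "conv ?W ?X y z = (\<Sum>h\<in>emb ` ?P. ?X h * y (inv\<^bsub>?W\<^esub> h \<otimes>\<^bsub>?W\<^esub> z))"
    using assms(4) wtensor_support[OF assms(2), of U d \<phi>] unfolding emb_def
    by (subst conv_eq_sum_superset[where S = "emb ` ?P"]) (auto simp: emb_def simp del: Collect_mem_eq)
  also have "\<dots> = (\<Sum>\<sigma>\<in>?P. ?X (emb \<sigma>) * y (inv\<^bsub>?W\<^esub> (emb \<sigma>) \<otimes>\<^bsub>?W\<^esub> z))"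
  proof (rule sum.reindex[unfolded comp_def])
    show "inj_on emb ?P"
    proof (rule inj_onI)
      fix \<sigma> \<tau>
      assume "\<sigma> \<in> ?P" "\<tau> \<in> ?P" "emb \<sigma> = emb \<tau>"
      then have "\<forall>i\<in>S. \<sigma> i = \<tau> i"
        unfolding emb_def by (metis (mono_tags, lifting) fst_conv)
      then show "\<sigma> = \<tau>"
        using PiE_ext \<open>\<sigma> \<in> ?P\<close> \<open>\<tau> \<in> ?P\<close> by blast
    qed
  qed
  also have "\<dots> = (\<Sum>\<sigma>\<in>?P. (\<Prod>j\<in>S. \<phi> j (\<sigma> j)) * y (inv\<^bsub>?W\<^esub> (emb \<sigma>) \<otimes>\<^bsub>?W\<^esub> z))"
    using in_carrier by (intro sum.cong refl) (auto simp: emb_def wtensor_def intro!: prod.cong)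
  finally show ?thesis
    by (simp add: emb_def)
qed

lemma prod_conv_eq_sum_PiE:
  fixes U (structure)
  assumes "finite S" "\<And>j. galg_elem U (\<phi> j)" "\<And>j. x j \<in> carrier U"
  shows "(\<Prod>j\<in>S. conv U (\<phi> j) (\<psi> j) (x j))
    = (\<Sum>\<sigma>\<in>PiE S (\<lambda>j. {a. \<phi> j a \<noteq> 0}). \<Prod>j\<in>S. \<phi> j (\<sigma> j) * \<psi> j (inv (\<sigma> j) \<otimes> x j))"
proof -
  have "conv U (\<phi> j) (\<psi> j) (x j) = (\<Sum>a\<in>{a. \<phi> j a \<noteq> 0}. \<phi> j a * \<psi> j (inv a \<otimes> x j))" for j
    using assms(2)[of j] assms(3)
    by (subst conv_eq_sum_superset[where S = "{a. \<phi> j a \<noteq> 0}"]) (auto simp: galg_elem_def)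
  then show ?thesis
    using assms(1,2) by (simp add: prod_sum_PiE galg_elem_def)
qed

lemma conv_wtensor:
  fixes U (structure)
  assumes "group U" "finite S" "\<And>j. galg_elem U (\<phi> j)" "\<And>j. galg_elem U (\<psi> j)"
  shows "conv (wreath U) (wtensor U d S \<phi>) (wtensor U r ((\<lambda>j. j + d) ` S) \<psi>)
       = wtensor U (d + r) S (\<lambda>j. conv U (\<phi> j) (\<psi> (j + d)))"
proof
  interpret group U by fact
  fix z :: "(int \<Rightarrow> 'a) \<times> int"
  obtain x k where z: "z = (x, k)"
    by fastforce
  let ?P = "PiE S (\<lambda>j. {a. \<phi> j a \<noteq> 0})"
  let ?supported = "k = d + r \<and> (\<forall>n. n \<notin> S \<longrightarrow> x n = \<one>)"
  show "conv (wreath U) (wtensor U d S \<phi>) (wtensor U r ((\<lambda>j. j + d) ` S) \<psi>) z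
      = wtensor U (d + r) S (\<lambda>j. conv U (\<phi> j) (\<psi> (j + d))) z"
  proof (cases "z \<in> carrier (wreath U)")
    case False
    then show ?thesis
      using assms(2) by (simp add: conv_def wtensor_outside_carrier)
  next
    case True
    then have x: "\<And>n. x n \<in> carrier U"
      by (simp add: z wreath_simps)
    have "\<sigma> j \<in> carrier U" if "\<sigma> \<in> ?P" "j \<in> S" for \<sigma> j
      using that assms(3) by (auto simp: galg_elem_def)
    then have "conv (wreath U) (wtensor U d S \<phi>) (wtensor U r ((\<lambda>j. j + d) ` S) \<psi>) z
        = (\<Sum>\<sigma>\<in>?P. (\<Prod>j\<in>S. \<phi> j (\<sigma> j))
            * (if ?supported then \<Prod>j\<in>S. \<psi> (j + d) (inv (\<sigma> j) \<otimes> x j) else 0))"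
      using assms(1,2) x
      by (subst conv_wtensor_eq_sum_PiE[OF assms(1-3) True], unfold z)
        (intro sum.cong refl, subst wtensor_shifted_at_inv_mult, auto)
    also have "\<dots> = (if ?supported then \<Prod>j\<in>S. conv U (\<phi> j) (\<psi> (j + d)) (x j) else 0)"
    proof (cases ?supported)
      case True
      then show ?thesis
        using prod_conv_eq_sum_PiE[OF assms(2,3) x] by (simp add: prod.distrib)
    next
      case False
      then show ?thesis
        by (simp only: if_not_P[OF False] if_False mult_zero_right sum.neutral_const)
    qed
    also have "\<dots> = wtensor U (d + r) S (\<lambda>j. conv U (\<phi> j) (\<psi> (j + d))) z"
      using x by (auto simp: z wtensor_def)
    finally show ?thesis .
  qed
qed

lemma conv_wtensor_extend:
  fixes U (structure)
  assumes "group U" "finite S" "S\<^sub>1 \<subseteq> S" "S\<^sub>2 \<subseteq> (\<lambda>j. j + d) ` S"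
    and "\<And>j. j \<in> S\<^sub>1 \<Longrightarrow> galg_elem U (\<phi> j)" "\<And>j. j \<in> S\<^sub>2 \<Longrightarrow> galg_elem U (\<psi> j)"
  shows "conv (wreath U) (wtensor U d S\<^sub>1 \<phi>) (wtensor U r S\<^sub>2 \<psi>)
    = wtensor U (d + r) S (\<lambda>j. conv U (if j \<in> S\<^sub>1 then \<phi> j else gbasis \<one>)
                                     (if j + d \<in> S\<^sub>2 then \<psi> (j + d) else gbasis \<one>))"
proof -
  interpret group U by fact
  let ?\<phi> = "\<lambda>j. if j \<in> S\<^sub>1 then \<phi> j else gbasis \<one>"
  let ?\<psi> = "\<lambda>j. if j \<in> S\<^sub>2 then \<psi> j else gbasis \<one>"
  have "wtensor U d S\<^sub>1 \<phi> = wtensor U d S ?\<phi>"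
    by (subst wtensor_cong[where \<psi> = ?\<phi>]) (auto intro!: wtensor_extend assms(2,3))
  moreover have "wtensor U r S\<^sub>2 \<psi> = wtensor U r ((\<lambda>j. j + d) ` S) ?\<psi>"
    by (subst wtensor_cong[where \<psi> = ?\<psi>]) (auto intro!: wtensor_extend assms(2,4))
  moreover have "conv (wreath U) (wtensor U d S ?\<phi>) (wtensor U r ((\<lambda>j. j + d) ` S) ?\<psi>)
      = wtensor U (d + r) S (\<lambda>j. conv U (?\<phi> j) (?\<psi> (j + d)))"
    using assms(5,6) galg_elem_gbasis[OF one_closed] by (intro conv_wtensor[OF assms(1,2)]) auto
  ultimately show ?thesis
    by (simp only:)
qed

lemma conv_wtensor_gbasis_tpow:
  fixes U (structure)
  assumes "group U" "finite S" "\<And>j. j \<in> S \<Longrightarrow> galg_elem U (\<phi> j)"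
  shows "conv (wreath U) (wtensor U d S \<phi>) (gbasis (tpow U r)) = wtensor U (d + r) S \<phi>"
proof -
  interpret group U by fact
  have "conv (wreath U) (wtensor U d S \<phi>) (wtensor U r {} \<phi>)
      = wtensor U (d + r) S (\<lambda>j. conv U (if j \<in> S then \<phi> j else gbasis \<one>)
                                       (if j + d \<in> {} then \<phi> (j + d) else gbasis \<one>))"
    by (rule conv_wtensor_extend) (use assms in auto)
  also have "\<dots> = wtensor U (d + r) S \<phi>"
    using assms(1,3) by (intro wtensor_cong) (simp add: conv_gbasis_one_right)
  finally show ?thesis
    unfolding gbasis_tpow_eq_wtensor[OF assms(1), of r \<phi>] .
qed

locale group_idempotent =
  fixes U :: "('a, 'b) monoid_scheme" and e :: "'a \<Rightarrow> complex"
  assumes group: "group U" and galg_elem_e: "galg_elem U e" and idem_e: "conv U e e = e"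
begin

abbreviation \<delta> :: "'a \<Rightarrow> complex" where "\<delta> \<equiv> gbasis \<one>\<^bsub>U\<^esub>"

abbreviation f :: "'a \<Rightarrow> complex" where "f \<equiv> \<delta> - e"

lemma galg_elem_\<delta>: "galg_elem U \<delta>"
  using group by (simp add: galg_elem_gbasis group.is_monoid monoid.one_closed)

lemma galg_elem_f: "galg_elem U f"
  by (rule galg_elem_diff[OF galg_elem_\<delta> galg_elem_e])

lemma conv_\<delta> [simp]:
  "galg_elem U x \<Longrightarrow> conv U \<delta> x = x"
  "galg_elem U x \<Longrightarrow> conv U x \<delta> = x"
  using conv_gbasis_one_left conv_gbasis_one_right group by blast+

lemma conv_f_e: "conv U f e = (\<lambda>_. 0)"
  by (simp add: conv_diff_left[OF galg_elem_\<delta> galg_elem_e] galg_elem_e idem_e fun_eq_iff)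

lemma conv_e_f: "conv U e f = (\<lambda>_. 0)"
  by (simp add: conv_diff_right galg_elem_e galg_elem_\<delta> idem_e fun_eq_iff)

lemma idem_f: "conv U f f = f"
  by (simp add: conv_diff_right conv_f_e galg_elem_f galg_elem_\<delta> fun_eq_iff)

lemma e_i_eq_wtensor: "e_i U e i = wtensor U 0 {i} (\<lambda>_. e)"
proof -
  have "conv (wreath U) (gbasis (tpow U (- i))) (wemb U e)
      = conv (wreath U) (wtensor U (- i) {} (\<lambda>_. \<delta>)) (wtensor U 0 {0} (\<lambda>_. e))"
    by (simp add: gbasis_tpow_eq_wtensor[OF group, of "- i" "\<lambda>_. \<delta>"] wemb_eq_wtensor[OF group galg_elem_e])
  also have "\<dots> = wtensor U (- i + 0) {i}
      (\<lambda>j. conv U (if j \<in> {} then \<delta> else \<delta>) (if j + - i \<in> {0} then e else \<delta>))"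
    by (rule conv_wtensor_extend[OF group]) (auto simp: galg_elem_e)
  also have "\<dots> = wtensor U (- i) {i} (\<lambda>_. e)"
    by (auto intro!: wtensor_cong simp: galg_elem_e)
  finally show ?thesis
    unfolding e_i_def by (simp add: conv_wtensor_gbasis_tpow[OF group] galg_elem_e)
qed

lemma f_i_eq_wtensor: "f_i U e i = wtensor U 0 {i} (\<lambda>_. f)"
proof -
  have "gunit (wreath U) = wtensor U 0 {i} (\<lambda>_. \<delta>)"
    unfolding gunit_wreath_eq_wtensor[OF group, of "\<lambda>_. \<delta>"] by (rule wtensor_extend) auto
  then show ?thesis
    by (simp add: f_i_def e_i_eq_wtensor wtensor_singleton_diff)
qed

lemma gprod_list_e_i_eq_wtensor:
  "gprod_list (wreath U) (map (e_i U e) is) = wtensor U 0 (set is) (\<lambda>_. e)"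
proof (induction "is")
  case Nil
  then show ?case
    by (simp add: gprod_list_def gunit_wreath_eq_wtensor[OF group])
next
  case (Cons i "is")
  have "gprod_list (wreath U) (map (e_i U e) (i # is))
      = conv (wreath U) (e_i U e i) (gprod_list (wreath U) (map (e_i U e) is))"
    by (simp add: gprod_list_def)
  also have "\<dots> = conv (wreath U) (wtensor U 0 {i} (\<lambda>_. e)) (wtensor U 0 (set is) (\<lambda>_. e))"
    by (simp only: Cons.IH e_i_eq_wtensor)
  also have "\<dots> = wtensor U (0 + 0) (set (i # is))
      (\<lambda>j. conv U (if j \<in> {i} then e else \<delta>) (if j + 0 \<in> set is then e else \<delta>))"
    by (rule conv_wtensor_extend[OF group]) (auto simp: galg_elem_e)
  also have "\<dots> = wtensor U 0 (set (i # is)) (\<lambda>_. e)"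
    by (auto intro!: wtensor_cong simp: galg_elem_e idem_e)
  finally show ?case .
qed

definition q_factor :: "int \<Rightarrow> int \<Rightarrow> 'a \<Rightarrow> complex" where
  "q_factor n j = (if j = 1 \<or> j = n then f else e)"

lemma galg_elem_q_factor: "galg_elem U (q_factor n j)"
  by (simp add: q_factor_def galg_elem_e galg_elem_f)

lemma q_n_eq_wtensor:
  assumes "2 \<le> n"
  shows "q_n U e n = wtensor U 0 {1..n} (q_factor n)"
proof -
  have "conv (wreath U) (f_i U e 1) (gprod_list (wreath U) (map (e_i U e) [2..n - 1]))
      = wtensor U (0 + 0) {1..n - 1}
          (\<lambda>j. conv U (if j \<in> {1} then f else \<delta>) (if j + 0 \<in> {2..n - 1} then e else \<delta>))"
    unfolding f_i_eq_wtensor gprod_list_e_i_eq_wtensor set_upto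
    by (rule conv_wtensor_extend[OF group]) (use assms in \<open>auto simp: galg_elem_e galg_elem_f\<close>)
  also have "\<dots> = wtensor U 0 {1..n - 1} (q_factor n)"
    by (auto intro!: wtensor_cong simp: q_factor_def galg_elem_e galg_elem_f)
  finally have "q_n U e n = conv (wreath U) (wtensor U 0 {1..n - 1} (q_factor n)) (wtensor U 0 {n} (\<lambda>_. f))"
    by (simp add: q_n_def f_i_eq_wtensor)
  also have "\<dots> = wtensor U (0 + 0) {1..n}
      (\<lambda>j. conv U (if j \<in> {1..n - 1} then q_factor n j else \<delta>) (if j + 0 \<in> {n} then f else \<delta>))"
    by (rule conv_wtensor_extend[OF group]) (use assms in \<open>auto simp: galg_elem_q_factor galg_elem_f\<close>)
  also have "\<dots> = wtensor U 0 {1..n} (q_factor n)"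
    using assms by (auto intro!: wtensor_cong simp: q_factor_def galg_elem_e galg_elem_f)
  finally show ?thesis .
qed

lemma q_factor_mismatch:
  assumes "2 \<le> n" "2 \<le> n'" "D \<le> n - 2" "2 - n' \<le> D" "D \<noteq> 0 \<or> n \<noteq> n'"
  shows "\<exists>j\<in>{1..n'}. j + D \<in> {1..n} \<and> conv U (q_factor n' j) (q_factor n (j + D)) = (\<lambda>_. 0)"
proof -
  consider "0 < D" | "D < 0" | "D = 0" "n < n'" | "D = 0" "n' < n"
    using assms(5) by linarith
  then show ?thesis
  proof cases
    case 1
    then show ?thesis
      using assms by (intro bexI[of _ 1]) (auto simp: q_factor_def conv_f_e)
  next
    case 2
    then show ?thesis
      using assms by (intro bexI[of _ "1 - D"]) (auto simp: q_factor_def conv_e_f)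
  next
    case 3
    then show ?thesis
      using assms by (intro bexI[of _ n]) (auto simp: q_factor_def conv_e_f)
  next
    case 4
    then show ?thesis
      using assms by (intro bexI[of _ n']) (auto simp: q_factor_def conv_f_e)
  qed
qed

lemma conv_shifted_q_wtensor:
  assumes "2 \<le> n" "2 \<le> n'" "D \<le> n - 2" "2 - n' \<le> D"
  shows "conv (wreath U) (wtensor U D {1..n'} (q_factor n')) (wtensor U 0 {1..n} (q_factor n))
    = (if D = 0 \<and> n = n' then wtensor U 0 {1..n} (q_factor n) else (\<lambda>_. 0))"
proof -
  let ?S = "{1..n'} \<union> {1 - D..n - D}"
  let ?\<Phi> = "\<lambda>j. conv U (if j \<in> {1..n'} then q_factor n' j else \<delta>)
                        (if j + D \<in> {1..n} then q_factor n (j + D) else \<delta>)"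
  have "{1..n} \<subseteq> (\<lambda>j. j + D) ` ?S"
    by (auto intro: image_eqI[where x = "_ - D"])
  then have product: "conv (wreath U) (wtensor U D {1..n'} (q_factor n')) (wtensor U 0 {1..n} (q_factor n))
      = wtensor U D ?S ?\<Phi>"
    using conv_wtensor_extend[OF group, of ?S "{1..n'}" "{1..n}" D "q_factor n'" "q_factor n" 0]
    by (simp add: galg_elem_q_factor)
  show ?thesis
  proof (cases "D = 0 \<and> n = n'")
    case True
    then have "wtensor U D ?S ?\<Phi> = wtensor U 0 {1..n} (q_factor n)"
      by (auto intro!: wtensor_cong simp: q_factor_def idem_e idem_f)
    then show ?thesis
      using True product by simp
  next
    case False
    then obtain j where "j \<in> {1..n'}" "j + D \<in> {1..n}" "conv U (q_factor n' j) (q_factor n (j + D)) = (\<lambda>_. 0)"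
      using q_factor_mismatch assms by blast
    then have "wtensor U D ?S ?\<Phi> = (\<lambda>_. 0)"
      by (intro wtensor_eq_zero[of ?S j]) auto
    then show ?thesis
      by (simp only: product if_not_P[OF False])
  qed
qed

end

theorem lemma3p2:
  fixes U :: "('a, 'b) monoid_scheme" and e :: "'a \<Rightarrow> complex" and m n m' n' :: int
  assumes "group U" and "has_torsion U" and "nontriv_projection U e"
    and "1 \<le> m" "m < n" and "1 \<le> m'" "m' < n'"
  shows "conv (wreath U)
           (conv (wreath U)
             (conv (wreath U) (q_n U e n') (gbasis (tpow U (-m')))) (gbasis (tpow U m)))
           (q_n U e n)
         = (if n = n' \<and> m = m' then q_n U e n else (\<lambda>_. 0))"
proof -
  interpret group_idempotent U e
    using assms(1,3) by (intro group_idempotent.intro) (auto simp: nontriv_projection_def)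
  have "2 \<le> n" "2 \<le> n'"
    using assms by auto
  then have "conv (wreath U) (conv (wreath U) (q_n U e n') (gbasis (tpow U (-m')))) (gbasis (tpow U m))
      = wtensor U (m - m') {1..n'} (q_factor n')"
    by (simp add: q_n_eq_wtensor conv_wtensor_gbasis_tpow[OF group] galg_elem_q_factor)
  then show ?thesis
    using conv_shifted_q_wtensor[of n n' "m - m'"] q_n_eq_wtensor \<open>2 \<le> n\<close> \<open>2 \<le> n'\<close> assms(4-7)
    by auto
qed

end
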